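(* Let $m$ and $n$ be relatively prime positive integers. Then $S(A_m \otimes A_n) = S(A_{mn})$, where $\otimes$ denotes the Kronecker product of matrices.
   Context: For a positive integer $k$, let $\Phi_d$ denote the $d$th cyclotomic polynomial and let $\Psi_k : \mathbf{Z}[X]/(X^k-1) \to \bigoplus_{d \mid k} \mathbf{Z}[X]/(\Phi_d(X))$ be the natural map $f \bmod (X^k-1) \mapsto \bigoplus_{d\mid k} f \bmod \Phi_d(X)$. Endow $\mathbf{Z}[X]/(X^k-1)$ with the basis $(1, \overline{X}, \dots, \overline{X}^{k-1})$, each $\mathbf{Z}[X]/(\Phi_d(X))$ with the basis $(1, \overline{X}, \dots, \overline{X}^{\phi(d)-1})$, and order the summands of the direct sum by increasing $d$. $A_k$ is the $k\times k$ integer matrix of $\Psi_k$ with respect to these bases (the $j$th column is the coordinate vector of $\Psi_k(\overline{X}^{j})$). For an integer matrix $A$, $S(A)$ denotes its Smith normal form, with all elementary divisors taken non-negative. *)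

theory Defs
  imports Complex_Main "Jordan_Normal_Form.Matrix"
    "HOL-Computational_Algebra.Polynomial" "HOL-Number_Theory.Totient"
begin

definition cyclo_complex :: "nat \<Rightarrow> complex poly" where
  "cyclo_complex d = (\<Prod>k\<in>{k. k < d \<and> coprime k d}. [:- cis (2 * pi * real k / real d), 1:])"

definition cyclotomic :: "nat \<Rightarrow> int poly" where
  "cyclotomic d = (THE p. map_poly of_int p = cyclo_complex d)"

text \<open>The canonical representative of X^j in Z[X]/(Phi_d) with respect to the basis
  1, X, ..., X^(phi(d)-1): the unique integer polynomial of degree below deg Phi_d
  congruent to X^j modulo Phi_d.\<close>
definition xpow_mod :: "nat \<Rightarrow> nat \<Rightarrow> int poly" where
  "xpow_mod d j = (THE r. degree r < degree (cyclotomic d) \<and> cyclotomic d dvd (Polynomial.monom 1 j - r))"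

definition A_rows :: "nat \<Rightarrow> (nat \<times> nat) list" where
  "A_rows k = concat (map (\<lambda>d. map (\<lambda>i. (d, i)) [0..<totient d]) (sorted_list_of_set {d. d dvd k}))"

text \<open>The k x k matrix A_k of Psi_k; column j is the coordinate vector of Psi_k(X^j).\<close>
definition A_mat :: "nat \<Rightarrow> int mat" where
  "A_mat k = mat k k (\<lambda>(r, c). case A_rows k ! r of (d, i) \<Rightarrow> coeff (xpow_mod d c) i)"

definition kron :: "'a :: times mat \<Rightarrow> 'a mat \<Rightarrow> 'a mat" where
  "kron A B = mat (dim_row A * dim_row B) (dim_col A * dim_col B)
     (\<lambda>(i, j). A $$ (i div dim_row B, j div dim_col B) * B $$ (i mod dim_row B, j mod dim_col B))"

definition is_smith_form :: "int mat \<Rightarrow> bool" where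
  "is_smith_form D \<longleftrightarrow>
     (\<forall>i j. i < dim_row D \<and> j < dim_col D \<and> i \<noteq> j \<longrightarrow> D $$ (i, j) = 0) \<and>
     (\<forall>i. i < min (dim_row D) (dim_col D) \<longrightarrow> D $$ (i, i) \<ge> 0) \<and>
     (\<forall>i. Suc i < min (dim_row D) (dim_col D) \<longrightarrow> D $$ (i, i) dvd D $$ (Suc i, Suc i))"

definition smith_normal_form :: "int mat \<Rightarrow> int mat" where
  "smith_normal_form A = (THE D. D \<in> carrier_mat (dim_row A) (dim_col A) \<and> is_smith_form D \<and>
     (\<exists>P Q. P \<in> carrier_mat (dim_row A) (dim_row A) \<and> invertible_mat P \<and>
            Q \<in> carrier_mat (dim_col A) (dim_col A) \<and> invertible_mat Q \<and> D = P * A * Q))"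

end

theory Submission
  imports Defs "Jordan_Normal_Form.Char_Poly"
begin

text \<open>
  By the Chinese remainder theorem, \<open>X \<mapsto> X \<otimes> X\<close> identifies \<open>\<int>[X]/(X\<^sup>m\<^sup>n - 1)\<close> with
  \<open>\<int>[X]/(X\<^sup>m - 1) \<otimes> \<int>[X]/(X\<^sup>n - 1)\<close>; on the monomial bases this is the column permutation
  \<open>c \<mapsto> g c\<close> with \<open>g c \<equiv> (c div n) u + (c mod n) v\<close>, where \<open>u, v\<close> are the CRT idempotents.
  On the other side, for coprime \<open>d\<^sub>1 | m\<close>, \<open>d\<^sub>2 | n\<close> the same substitution is a ring isomorphism
  \<open>\<int>[X]/(\<Phi>\<^bsub>d\<^sub>1d\<^sub>2\<^esub>) \<cong> \<int>[X]/(\<Phi>\<^bsub>d\<^sub>1\<^esub>) \<otimes> \<int>[X]/(\<Phi>\<^bsub>d\<^sub>2\<^esub>)\<close> with inverse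
  \<open>X\<^sup>i\<^sup>1 \<otimes> X\<^sup>i\<^sup>2 \<mapsto> X\<^bsup>i\<^sub>1u + i\<^sub>2v\<^esup>\<close>, and \<open>(d\<^sub>1, d\<^sub>2) \<mapsto> d\<^sub>1d\<^sub>2\<close> is a bijection onto the divisors
  of \<open>mn\<close>. These isomorphisms assemble to a unimodular matrix \<open>P\<close> with
  \<open>P A\<^bsub>mn\<^esub> Q = A\<^sub>m \<otimes> A\<^sub>n\<close> for the permutation matrix \<open>Q\<close> of \<open>g\<close>, so both sides have the same
  Smith normal form. All identities between reduced coefficient vectors are verified by evaluating
  at primitive roots of unity: a vector of length \<open>\<phi>(d)\<close> is determined by its values at the
  \<open>\<phi>(d)\<close> primitive \<open>d\<close>-th roots, and \<open>\<zeta>\<^sub>1\<zeta>\<^sub>2\<close> is a primitive \<open>d\<^sub>1d\<^sub>2\<close>-th root.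
\<close>

section \<open>Primitive roots of unity\<close>

definition unity_root :: "nat \<Rightarrow> nat \<Rightarrow> complex" where
  "unity_root d k = cis (2 * pi * real k / real d)"

definition primitive_roots :: "nat \<Rightarrow> complex set" where
  "primitive_roots d = unity_root d ` {k. k < d \<and> coprime k d}"

lemma unity_root_eq_power: "unity_root d k = unity_root d 1 ^ k"
  unfolding unity_root_def by (simp add: DeMoivre mult_ac)

lemma unity_root_power_order:
  assumes "d > 0"
  shows "unity_root d 1 ^ d = 1"
proof -
  have "unity_root d 1 ^ d = cis (2 * pi)"
    unfolding unity_root_def using assms by (simp add: DeMoivre)
  then show ?thesis by simp
qed

lemma power_mod_if_power_eq_1:
  assumes "(w :: 'a :: monoid_mult) ^ d = 1"
  shows "w ^ j = w ^ (j mod d)"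
proof -
  have "w ^ j = w ^ (d * (j div d) + j mod d)" by simp
  also have "\<dots> = (w ^ d) ^ (j div d) * w ^ (j mod d)" by (simp only: power_add power_mult)
  finally show ?thesis using assms by simp
qed

lemma unity_root_mod: "d > 0 \<Longrightarrow> unity_root d k = unity_root d (k mod d)"
  by (metis unity_root_power_order unity_root_eq_power power_mod_if_power_eq_1)

lemma primitive_root_power_mod:
  assumes "d > 0" and "z \<in> primitive_roots d"
  shows "z ^ j = z ^ (j mod d)"
proof (rule power_mod_if_power_eq_1)
  obtain k where "z = unity_root d k" using assms(2) unfolding primitive_roots_def by auto
  then show "z ^ d = 1"
    using unity_root_power_order[OF assms(1)] by (metis unity_root_eq_power power_mult mult.commute power_one)
qed

lemma inj_on_unity_root: "d > 0 \<Longrightarrow> inj_on (unity_root d) {..<d}"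
  using bij_betw_imp_inj_on[OF bij_betw_roots_unity[of d]] unfolding unity_root_def by simp

lemma card_coprime_less_eq_totient:
  assumes "d > 0"
  shows "card {k. k < d \<and> coprime k d} = totient d"
proof (cases "d = 1")
  case True
  then have "{k. k < d \<and> coprime k d} = {0}" by auto
  with True show ?thesis by simp
next
  case False
  with assms have "k \<in> totatives d \<Longrightarrow> k < d" for k
    using totatives_less by simp
  then have "{k. k < d \<and> coprime k d} = totatives d"
    using False by (auto simp: in_totatives_iff intro!: Nat.gr0I)
  then show ?thesis by (simp add: totient_def)
qed

lemma card_primitive_roots: "d > 0 \<Longrightarrow> card (primitive_roots d) = totient d"
  unfolding primitive_roots_def
  by (subst card_image) (auto intro: inj_on_subset[OF inj_on_unity_root] simp: card_coprime_less_eq_totient)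

lemma finite_primitive_roots: "finite (primitive_roots d)"
  unfolding primitive_roots_def by auto

lemma primitive_roots_mult_coprime:
  assumes d1: "d1 > 0" and d2: "d2 > 0" and cop: "coprime d1 d2"
    and z1: "z1 \<in> primitive_roots d1" and z2: "z2 \<in> primitive_roots d2"
  shows "z1 * z2 \<in> primitive_roots (d1 * d2)"
proof -
  obtain k1 where k1: "k1 < d1" "coprime k1 d1" "z1 = unity_root d1 k1"
    using z1 unfolding primitive_roots_def by auto
  obtain k2 where k2: "k2 < d2" "coprime k2 d2" "z2 = unity_root d2 k2"
    using z2 unfolding primitive_roots_def by auto
  let ?d = "d1 * d2" and ?w = "unity_root (d1 * d2) 1"
  define k where "k = k1 * d2 + k2 * d1"
  have "unity_root d1 1 = ?w ^ d2" "unity_root d2 1 = ?w ^ d1"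
    unfolding unity_root_def using d1 d2 by (simp_all add: DeMoivre)
  then have "z1 * z2 = ?w ^ k"
    unfolding k_def k1(3) k2(3) by (subst (1 2) unity_root_eq_power) (simp add: power_add power_mult mult_ac)
  also have "\<dots> = unity_root ?d (k mod ?d)"
    using d1 d2 by (metis unity_root_eq_power unity_root_mod nat_0_less_mult_iff)
  finally have eq: "z1 * z2 = unity_root ?d (k mod ?d)" .
  have gcds: "gcd k d1 = gcd (k1 * d2) d1" "gcd k d2 = gcd (k2 * d1) d2"
    unfolding k_def by (metis gcd_add_mult gcd.commute add.commute)+
  have "coprime (k1 * d2) d1" "coprime (k2 * d1) d2"
    using k1(2) k2(2) cop by (simp_all add: coprime_commute)
  then have "coprime k d1" "coprime k d2"
    using gcds by (simp_all add: coprime_iff_gcd_eq_1)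
  then have "coprime k ?d" by simp
  then have "coprime (k mod ?d) ?d"
    using d1 d2 coprime_mod_left_iff nat_0_less_mult_iff by blast
  moreover have "k mod ?d < ?d" using d1 d2 by simp
  ultimately show ?thesis unfolding primitive_roots_def eq by auto
qed

lemma poly_eq_0_if_roots_exceed_degree:
  fixes q :: "'a :: idom poly"
  assumes "finite S" and "\<And>z. z \<in> S \<Longrightarrow> poly q z = 0" and "degree q < card S"
  shows "q = 0"
proof (rule ccontr)
  assume "q \<noteq> 0"
  have "card S \<le> card {x. poly q x = 0}"
    by (rule card_mono[OF poly_roots_finite[OF \<open>q \<noteq> 0\<close>]]) (use assms in auto)
  also have "\<dots> \<le> degree q" by (rule card_poly_roots_bound[OF \<open>q \<noteq> 0\<close>])
  finally show False using assms by simp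
qed

lemma coeffs_eq_if_eval_primitive_roots_eq:
  assumes d: "d > 0"
    and eq: "\<And>z. z \<in> primitive_roots d \<Longrightarrow> (\<Sum>i<totient d. f i * z ^ i) = (\<Sum>i<totient d. g i * z ^ i)"
    and i: "i < totient d"
  shows "f i = (g i :: complex)"
proof -
  define q where "q = (\<Sum>k<totient d. monom (f k - g k) k)"
  have "q = 0"
  proof (rule poly_eq_0_if_roots_exceed_degree[OF finite_primitive_roots])
    show "degree q < card (primitive_roots d)" unfolding card_primitive_roots[OF d] q_def
      by (rule degree_sum_less) (use d in \<open>auto intro: le_less_trans[OF degree_monom_le]\<close>)
    fix z assume "z \<in> primitive_roots d"
    then show "poly q z = 0"
      using eq unfolding q_def by (simp add: poly_sum poly_monom left_diff_distrib sum_subtractf)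
  qed
  then have "coeff q i = 0" by simp
  then show ?thesis unfolding q_def using i by (simp add: coeff_sum coeff_monom)
qed

lemma coeffs_eq_if_eval_primitive_root_pairs_eq:
  assumes d1: "d1 > 0" and d2: "d2 > 0"
    and eq: "\<And>z1 z2. z1 \<in> primitive_roots d1 \<Longrightarrow> z2 \<in> primitive_roots d2 \<Longrightarrow>
        (\<Sum>i1<totient d1. \<Sum>i2<totient d2. F i1 i2 * z1 ^ i1 * z2 ^ i2)
      = (\<Sum>i1<totient d1. \<Sum>i2<totient d2. G i1 i2 * z1 ^ i1 * z2 ^ i2)"
    and i1: "i1 < totient d1" and i2: "i2 < totient d2"
  shows "F i1 i2 = (G i1 i2 :: complex)"
proof (rule coeffs_eq_if_eval_primitive_roots_eq[OF d2 _ i2])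
  fix z2 assume z2: "z2 \<in> primitive_roots d2"
  show "(\<Sum>k<totient d2. F i1 k * z2 ^ k) = (\<Sum>k<totient d2. G i1 k * z2 ^ k)"
  proof (rule coeffs_eq_if_eval_primitive_roots_eq[OF d1 _ i1])
    fix z1 assume z1: "z1 \<in> primitive_roots d1"
    show "(\<Sum>j<totient d1. (\<Sum>k<totient d2. F j k * z2 ^ k) * z1 ^ j)
        = (\<Sum>j<totient d1. (\<Sum>k<totient d2. G j k * z2 ^ k) * z1 ^ j)"
      using eq[OF z1 z2] by (simp add: sum_distrib_left sum_distrib_right mult_ac)
  qed
qed

section \<open>Cyclotomic polynomials\<close>

lemma cyclo_complex_unity_root:
  "cyclo_complex d = (\<Prod>k\<in>{k. k < d \<and> coprime k d}. [:- unity_root d k, 1:])"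
  unfolding cyclo_complex_def unity_root_def by simp

lemma prod_unity_roots_linear:
  assumes d: "d > 0"
  shows "(\<Prod>k<d. [:- unity_root d k, 1:]) = monom 1 d - 1"
proof -
  define p where "p = (\<Prod>k<d. [:- unity_root d k, 1:])"
  have degp: "degree p = d" unfolding p_def by (subst degree_prod_sum_eq) auto
  have lcp: "lead_coeff p = 1" unfolding p_def by (simp add: lead_coeff_prod)
  define q where "q = p - (monom 1 d - 1)"
  have "coeff q i = 0" if "i > d - 1" for i
  proof (cases "i = d")
    case True
    then show ?thesis using lcp degp d unfolding q_def by (simp add: coeff_monom)
  next
    case False
    then have "i > degree p" using that degp by simp
    then show ?thesis using False that d unfolding q_def by (simp add: coeff_eq_0 coeff_monom)
  qed
  then have "degree q \<le> d - 1" by (intro degree_le) auto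
  have "q = 0"
  proof (rule poly_eq_0_if_roots_exceed_degree[of "unity_root d ` {..<d}"])
    show "degree q < card (unity_root d ` {..<d})"
      using \<open>degree q \<le> d - 1\<close> d by (simp add: card_image[OF inj_on_unity_root[OF d]])
    fix z assume "z \<in> unity_root d ` {..<d}"
    then obtain k where k: "k < d" "z = unity_root d k" by auto
    have "poly p z = 0" unfolding p_def poly_prod using k by (subst prod_zero_iff) auto
    moreover have "z ^ d = 1"
      using k unity_root_power_order[OF d] by (metis unity_root_eq_power power_mult mult.commute power_one)
    ultimately show "poly q z = 0" unfolding q_def by (simp add: poly_monom)
  qed simp
  then show ?thesis unfolding q_def p_def by simp
qed

text \<open>Every \<open>d\<close>-th root of unity \<open>\<zeta>\<^bsup>j\<^esup>\<^sub>d\<close> is a primitive root of the unique order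
  \<open>e = d / gcd j d\<close>, namely \<open>\<zeta>\<^bsup>j / gcd j d\<^esup>\<^sub>e\<close>.\<close>

lemma prod_divisors_primitive_linear_factors:
  assumes d: "d > 0"
  shows "(\<Prod>e | e dvd d. \<Prod>k\<in>{k. k < e \<and> coprime k e}. [:- unity_root e k, 1:])
       = (\<Prod>j<d. [:- unity_root d j, 1:])"
proof -
  have fin: "finite {e. e dvd d}" using d by simp
  have "(\<Prod>e | e dvd d. \<Prod>k\<in>{k. k < e \<and> coprime k e}. [:- unity_root e k, 1:])
       = (\<Prod>(e, k)\<in>(SIGMA e:{e. e dvd d}. {k. k < e \<and> coprime k e}). [:- unity_root e k, 1:])"
    by (rule prod.Sigma) (use fin in auto)
  also have "\<dots> = (\<Prod>j<d. [:- unity_root d j, 1:])"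
  proof (rule prod.reindex_bij_witness[where j = "\<lambda>(e, k). k * (d div e)"
         and i = "\<lambda>j. (d div gcd j d, j div gcd j d)"])
    fix a assume "a \<in> (SIGMA e:{e. e dvd d}. {k. k < e \<and> coprime k e})"
    then obtain e k where ek: "a = (e, k)" "e dvd d" "k < e" "coprime k e" by auto
    define q where "q = d div e"
    have dq: "d = e * q" using ek(2) unfolding q_def by simp
    have qpos: "q > 0" and epos: "e > 0" using d dq by auto
    have g: "gcd (k * q) d = q" unfolding dq using ek(4)
      by (metis coprime_imp_gcd_eq_1 gcd_mult_distrib_nat mult.commute mult.right_neutral)
    show "(\<lambda>j. (d div gcd j d, j div gcd j d)) ((\<lambda>(e, k). k * (d div e)) a) = a"
      using g qpos epos dq ek(1) by (simp add: q_def[symmetric])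
    show "(\<lambda>(e, k). k * (d div e)) a \<in> {..<d}"
      using ek qpos dq by (simp add: q_def[symmetric])
    have "real (k * q) / real d = real k / real e"
      using dq qpos by (simp add: field_simps)
    then have "unity_root d (k * q) = unity_root e k"
      unfolding unity_root_def by (metis times_divide_eq_right)
    then show "[:- unity_root d ((\<lambda>(e, k). k * (d div e)) a), 1:] = (case a of (e, k) \<Rightarrow> [:- unity_root e k, 1:])"
      using ek(1) by (simp add: q_def[symmetric])
  next
    fix j assume j: "j \<in> {..<d}"
    define g where "g = gcd j d"
    have gpos: "g > 0" using d unfolding g_def by simp
    have gd: "g dvd d" "g dvd j" unfolding g_def by auto
    show "(\<lambda>(e, k). k * (d div e)) ((\<lambda>j. (d div gcd j d, j div gcd j d)) j) = j"
      using gd gpos d by (simp add: g_def[symmetric] div_div_eq_right)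
    have "j div g < d div g" using j gd gpos
      by (metis dvd_div_mult_self mult_less_cancel2 lessThan_iff)
    moreover have "coprime (j div g) (d div g)" unfolding g_def
      by (rule div_gcd_coprime) (use d in simp)
    moreover have "d div g dvd d" using gd by (metis dvd_div_mult_self dvd_triv_left)
    ultimately show "(\<lambda>j. (d div gcd j d, j div gcd j d)) j \<in> (SIGMA e:{e. e dvd d}. {k. k < e \<and> coprime k e})"
      by (simp add: g_def[symmetric])
  qed
  finally show ?thesis .
qed

lemma prod_cyclo_complex_divisors:
  "d > 0 \<Longrightarrow> (\<Prod>e | e dvd d. cyclo_complex e) = monom 1 d - 1"
  using prod_divisors_primitive_linear_factors prod_unity_roots_linear by (simp add: cyclo_complex_unity_root)

lemma lead_coeff_cyclo_complex: "lead_coeff (cyclo_complex d) = 1"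
  unfolding cyclo_complex_def by (simp add: lead_coeff_prod)

lemma degree_cyclo_complex: "degree (cyclo_complex d) = card {k. k < d \<and> coprime k d}"
  unfolding cyclo_complex_def by (subst degree_prod_sum_eq) auto

text \<open>Integrality by strong induction: \<open>X\<^sup>d - 1\<close> divided by the monic integer polynomial
  \<open>\<Prod>\<^bsub>e | d, e < d\<^esub> \<Phi>\<^sub>e\<close> leaves an integer quotient, and that quotient is \<open>\<Phi>\<^sub>d\<close>.\<close>

lemma cyclo_complex_integral: "d > 0 \<Longrightarrow> \<exists>p. of_int_poly p = cyclo_complex d"
proof (induction d rule: less_induct)
  case (less d)
  define E where "E = {e. e dvd d \<and> e < d}"
  have finE: "finite E" unfolding E_def by simp
  have "\<exists>p. of_int_poly p = cyclo_complex e" if "e \<in> E" for e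
  proof -
    have "e < d" "e > 0" using that less.prems unfolding E_def by (auto intro: dvd_pos_nat)
    then show ?thesis using less.IH by blast
  qed
  then obtain f :: "nat \<Rightarrow> int poly" where f: "\<And>e. e \<in> E \<Longrightarrow> of_int_poly (f e) = cyclo_complex e"
    by metis
  define G where "G = (\<Prod>e\<in>E. f e)"
  have mapG: "of_int_poly G = (\<Prod>e\<in>E. cyclo_complex e)"
    unfolding G_def of_int_poly_hom.hom_prod using f by simp
  have "of_int (lead_coeff G) = (lead_coeff (of_int_poly G) :: complex)" by simp
  also have "\<dots> = 1" unfolding mapG by (simp add: lead_coeff_prod lead_coeff_cyclo_complex)
  finally have lcG: "lead_coeff G = 1" by simp
  then have G0: "G \<noteq> 0" by auto
  have divisors: "{e. e dvd d} = insert d E" "d \<notin> E" unfolding E_def using less.prems by auto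
  have key: "cyclo_complex d * of_int_poly G = monom 1 d - 1"
    using prod_cyclo_complex_divisors[OF less.prems] unfolding divisors(1) mapG
    by (simp add: prod.insert[OF finE divisors(2)])
  obtain q r where qr: "pseudo_divmod (monom 1 d - 1) G = (q, r)" by fastforce
  from pseudo_divmod[OF G0 qr] lcG
  have eq: "monom 1 d - 1 = G * q + r" and rdeg: "r = 0 \<or> degree r < degree G" by auto
  have "(monom 1 d - 1 :: complex poly) = of_int_poly (monom 1 d - 1)"
    by (simp add: of_int_poly_hom.hom_minus)
  also have "\<dots> = of_int_poly G * of_int_poly q + of_int_poly r"
    unfolding eq by (simp add: of_int_poly_hom.hom_add of_int_poly_hom.hom_mult)
  finally have rem: "of_int_poly G * (cyclo_complex d - of_int_poly q) = (of_int_poly r :: complex poly)"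
    using key by (simp add: algebra_simps)
  have "cyclo_complex d - of_int_poly q = 0"
  proof (rule ccontr)
    assume ne: "cyclo_complex d - of_int_poly q \<noteq> 0"
    have nG: "(of_int_poly G :: complex poly) \<noteq> 0" using G0 by simp
    have "degree (of_int_poly G * (cyclo_complex d - of_int_poly q)) \<ge> degree (of_int_poly G :: complex poly)"
      using ne nG by (simp add: degree_mult_eq)
    moreover have "of_int_poly G * (cyclo_complex d - of_int_poly q) \<noteq> 0" using ne nG by simp
    ultimately show False using rem rdeg by auto
  qed
  then show ?case by auto
qed

lemma of_int_poly_cyclotomic:
  assumes "d > 0"
  shows "of_int_poly (cyclotomic d) = cyclo_complex d"
proof -
  obtain p where p: "of_int_poly p = cyclo_complex d" using cyclo_complex_integral[OF assms] by blast
  have "cyclotomic d = p" unfolding cyclotomic_def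
  proof (rule the_equality)
    fix p' assume "of_int_poly p' = cyclo_complex d"
    then have "(of_int_poly p' :: complex poly) = of_int_poly p" using p by simp
    then show "p' = p" by (rule of_int_poly_hom.injectivity)
  qed (rule p)
  then show ?thesis using p by simp
qed

lemma degree_cyclotomic:
  assumes "d > 0"
  shows "degree (cyclotomic d) = totient d"
proof -
  have "degree (cyclotomic d) = degree (of_int_poly (cyclotomic d) :: complex poly)" by simp
  also have "\<dots> = totient d"
    using degree_cyclo_complex[of d] card_coprime_less_eq_totient[OF assms]
    by (simp add: of_int_poly_cyclotomic[OF assms])
  finally show ?thesis .
qed

lemma lead_coeff_cyclotomic:
  assumes "d > 0"
  shows "lead_coeff (cyclotomic d) = 1"
proof -
  have "(of_int (lead_coeff (cyclotomic d)) :: complex) = lead_coeff (of_int_poly (cyclotomic d) :: complex poly)"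
    by simp
  also have "\<dots> = 1" using lead_coeff_cyclo_complex[of d] by (simp add: of_int_poly_cyclotomic[OF assms])
  finally show ?thesis by (simp only: of_int_eq_1_iff)
qed

lemma cyclotomic_neq_0: "d > 0 \<Longrightarrow> cyclotomic d \<noteq> 0"
  using lead_coeff_cyclotomic[of d] by auto

lemma poly_cyclotomic_primitive_root:
  assumes "d > 0" and "z \<in> primitive_roots d"
  shows "poly (of_int_poly (cyclotomic d)) z = 0"
proof -
  obtain k where "k < d" "coprime k d" "z = unity_root d k"
    using assms(2) unfolding primitive_roots_def by auto
  then show ?thesis
    unfolding of_int_poly_cyclotomic[OF assms(1)] cyclo_complex_unity_root poly_prod
    by (subst prod_zero_iff) auto
qed

section \<open>Reduction of \<open>X\<^sup>j\<close> modulo \<open>\<Phi>\<^sub>d\<close>\<close>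

lemma xpow_mod_unique:
  assumes "degree r1 < degree (cyclotomic d)" "cyclotomic d dvd monom 1 j - r1"
    and "degree r2 < degree (cyclotomic d)" "cyclotomic d dvd monom 1 j - r2"
  shows "r1 = r2"
proof (rule ccontr)
  assume ne: "r1 \<noteq> r2"
  have "cyclotomic d dvd (monom 1 j - r2) - (monom 1 j - r1)"
    using dvd_diff[OF assms(4) assms(2)] .
  then have "cyclotomic d dvd r1 - r2" by simp
  then have "degree (cyclotomic d) \<le> degree (r1 - r2)" using ne by (intro dvd_imp_degree_le) auto
  moreover have "degree (r1 - r2) \<le> max (degree r1) (degree r2)" by (rule degree_diff_le_max)
  ultimately show False using assms by simp
qed

lemma xpow_mod_exists:
  assumes d: "d > 0"
  shows "\<exists>r. degree r < degree (cyclotomic d) \<and> cyclotomic d dvd monom 1 j - r"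
proof -
  obtain q r where qr: "pseudo_divmod (monom 1 j) (cyclotomic d) = (q, r)" by fastforce
  from pseudo_divmod[OF cyclotomic_neq_0[OF d] qr] lead_coeff_cyclotomic[OF d]
  have eq: "monom 1 j = cyclotomic d * q + r" and rdeg: "r = 0 \<or> degree r < degree (cyclotomic d)"
    by auto
  have "degree (cyclotomic d) > 0" using degree_cyclotomic[OF d] d by simp
  then have "degree r < degree (cyclotomic d)" using rdeg by auto
  moreover have "cyclotomic d dvd monom 1 j - r" using eq by simp
  ultimately show ?thesis by blast
qed

lemma xpow_mod:
  assumes d: "d > 0"
  shows degree_xpow_mod: "degree (xpow_mod d j) < totient d"
    and cyclotomic_dvd_xpow_mod: "cyclotomic d dvd monom 1 j - xpow_mod d j"
proof -
  have "degree (xpow_mod d j) < degree (cyclotomic d) \<and> cyclotomic d dvd monom 1 j - xpow_mod d j"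
    unfolding xpow_mod_def
    by (rule theI'[of "\<lambda>r. degree r < degree (cyclotomic d) \<and> cyclotomic d dvd monom 1 j - r"])
       (use xpow_mod_exists[OF d] xpow_mod_unique in blast)
  then show "degree (xpow_mod d j) < totient d" "cyclotomic d dvd monom 1 j - xpow_mod d j"
    using degree_cyclotomic[OF d] by auto
qed

lemma xpow_mod_small:
  assumes d: "d > 0" and j: "j < totient d"
  shows "xpow_mod d j = monom 1 j"
  unfolding xpow_mod_def
proof (rule the_equality)
  show "degree (monom (1 :: int) j) < degree (cyclotomic d) \<and> cyclotomic d dvd monom 1 j - monom 1 j"
    using j degree_cyclotomic[OF d] by (simp add: degree_monom_eq)
  fix r assume "degree r < degree (cyclotomic d) \<and> cyclotomic d dvd monom 1 j - r"
  then show "r = monom 1 j"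
    using xpow_mod_unique[of r d j "monom 1 j"] j degree_cyclotomic[OF d] by (auto simp: degree_monom_eq)
qed

lemma poly_xpow_mod_primitive_root:
  assumes d: "d > 0" and z: "z \<in> primitive_roots d"
  shows "poly (of_int_poly (xpow_mod d j)) z = z ^ j"
proof -
  obtain h where h: "monom 1 j - xpow_mod d j = cyclotomic d * h"
    using cyclotomic_dvd_xpow_mod[OF d, of j] by (auto elim: dvdE)
  have "(of_int_poly (monom 1 j - xpow_mod d j) :: complex poly) = of_int_poly (cyclotomic d) * of_int_poly h"
    unfolding h by (simp add: of_int_poly_hom.hom_mult)
  then have "poly (of_int_poly (monom 1 j - xpow_mod d j) :: complex poly) z = 0"
    using poly_cyclotomic_primitive_root[OF d z] by simp
  then show ?thesis by (simp add: of_int_poly_hom.hom_minus poly_monom)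
qed

lemma poly_eq_sum_lessThan:
  fixes p :: "'a :: comm_semiring_1 poly"
  assumes "degree p < N"
  shows "poly p z = (\<Sum>i<N. coeff p i * z ^ i)"
proof -
  have "poly p z = (\<Sum>i\<le>degree p. coeff p i * z ^ i)" by (rule poly_altdef)
  also have "\<dots> = (\<Sum>i<N. coeff p i * z ^ i)"
    by (rule sum.mono_neutral_left) (use assms in \<open>auto simp: coeff_eq_0\<close>)
  finally show ?thesis .
qed

lemma sum_coeff_xpow_mod_primitive_root:
  assumes d: "d > 0" and z: "z \<in> primitive_roots d"
  shows "(\<Sum>i<totient d. of_int (coeff (xpow_mod d j) i) * z ^ i) = z ^ j"
proof -
  have "poly (of_int_poly (xpow_mod d j)) z = (\<Sum>i<totient d. coeff (of_int_poly (xpow_mod d j)) i * z ^ i)"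
    by (rule poly_eq_sum_lessThan) (use degree_xpow_mod[OF d] in simp)
  then show ?thesis using poly_xpow_mod_primitive_root[OF d z] by simp
qed

lemma xpow_mod_cong:
  assumes d: "d > 0" and jj: "[j = j'] (mod d)"
  shows "xpow_mod d j = xpow_mod d j'"
proof (rule poly_eqI)
  fix i
  show "coeff (xpow_mod d j) i = coeff (xpow_mod d j') i"
  proof (cases "i < totient d")
    case True
    have "(of_int (coeff (xpow_mod d j) i) :: complex) = of_int (coeff (xpow_mod d j') i)"
    proof (rule coeffs_eq_if_eval_primitive_roots_eq[OF d _ True])
      fix z assume z: "z \<in> primitive_roots d"
      show "(\<Sum>i<totient d. of_int (coeff (xpow_mod d j) i) * z ^ i)
          = (\<Sum>i<totient d. of_int (coeff (xpow_mod d j') i) * z ^ i)"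
        using primitive_root_power_mod[OF d z, of j] primitive_root_power_mod[OF d z, of j'] jj
        by (simp add: sum_coeff_xpow_mod_primitive_root[OF d z] cong_def)
    qed
    then show ?thesis by (simp only: of_int_eq_iff)
  qed (use degree_xpow_mod[OF d, of j] degree_xpow_mod[OF d, of j'] in \<open>simp add: coeff_eq_0\<close>)
qed

lemma sum_sum_sum_product_swap:
  fixes A :: "'b \<Rightarrow> 'a :: comm_semiring_1"
  shows "(\<Sum>i1\<in>I1. \<Sum>i2\<in>I2. (\<Sum>i\<in>I. B i i1 * C i i2 * A i) * x i1 * y i2)
       = (\<Sum>i\<in>I. A i * (\<Sum>i1\<in>I1. B i i1 * x i1) * (\<Sum>i2\<in>I2. C i i2 * y i2))"
proof -
  have "(\<Sum>i1\<in>I1. \<Sum>i2\<in>I2. (\<Sum>i\<in>I. B i i1 * C i i2 * A i) * x i1 * y i2)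
      = (\<Sum>i1\<in>I1. \<Sum>i2\<in>I2. \<Sum>i\<in>I. A i * (B i i1 * x i1) * (C i i2 * y i2))"
    unfolding sum_distrib_right by (simp add: mult_ac)
  also have "\<dots> = (\<Sum>i1\<in>I1. \<Sum>i\<in>I. \<Sum>i2\<in>I2. A i * (B i i1 * x i1) * (C i i2 * y i2))"
    by (simp add: sum.swap[of _ I2])
  also have "\<dots> = (\<Sum>i\<in>I. \<Sum>i1\<in>I1. \<Sum>i2\<in>I2. A i * (B i i1 * x i1) * (C i i2 * y i2))"
    by (rule sum.swap)
  also have "\<dots> = (\<Sum>i\<in>I. A i * (\<Sum>i1\<in>I1. B i i1 * x i1) * (\<Sum>i2\<in>I2. C i i2 * y i2))"
  proof (rule sum.cong[OF refl])
    fix i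
    have "A i * (\<Sum>i1\<in>I1. B i i1 * x i1) * (\<Sum>i2\<in>I2. C i i2 * y i2)
        = A i * (\<Sum>i1\<in>I1. \<Sum>i2\<in>I2. (B i i1 * x i1) * (C i i2 * y i2))"
      by (simp only: mult.assoc[of "A i"] sum_product)
    also have "\<dots> = (\<Sum>i1\<in>I1. \<Sum>i2\<in>I2. A i * (B i i1 * x i1) * (C i i2 * y i2))"
      by (simp add: sum_distrib_left mult.assoc)
    finally show "(\<Sum>i1\<in>I1. \<Sum>i2\<in>I2. A i * (B i i1 * x i1) * (C i i2 * y i2))
        = A i * (\<Sum>i1\<in>I1. B i i1 * x i1) * (\<Sum>i2\<in>I2. C i i2 * y i2)" by simp
  qed
  finally show ?thesis .
qed

text \<open>The substitution \<open>X \<mapsto> X \<otimes> X\<close>, \<open>\<int>[X]/(\<Phi>\<^bsub>d\<^sub>1d\<^sub>2\<^esub>) \<rightarrow> \<int>[X]/(\<Phi>\<^bsub>d\<^sub>1\<^esub>) \<otimes> \<int>[X]/(\<Phi>\<^bsub>d\<^sub>2\<^esub>)\<close>,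
  is a ring homomorphism: the image of \<open>X\<^sup>c\<close>, expanded through the basis of \<open>\<int>[X]/(\<Phi>\<^bsub>d\<^sub>1d\<^sub>2\<^esub>)\<close>,
  is \<open>X\<^sup>c \<otimes> X\<^sup>c\<close>. Evaluation at \<open>(\<zeta>\<^sub>1, \<zeta>\<^sub>2)\<close> reduces this to \<open>(\<zeta>\<^sub>1\<zeta>\<^sub>2)\<^sup>c = \<zeta>\<^sub>1\<^sup>c\<zeta>\<^sub>2\<^sup>c\<close>.\<close>

lemma coeff_xpow_mod_mult_coprime:
  assumes d1: "d1 > 0" and d2: "d2 > 0" and cop: "coprime d1 d2"
    and i1: "i1 < totient d1" and i2: "i2 < totient d2"
  shows "(\<Sum>i<totient (d1 * d2). coeff (xpow_mod d1 i) i1 * coeff (xpow_mod d2 i) i2 * coeff (xpow_mod (d1 * d2) c) i)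
       = coeff (xpow_mod d1 c) i1 * coeff (xpow_mod d2 c) i2"
proof -
  define L where "L i1 i2 = (\<Sum>i<totient (d1 * d2).
      coeff (xpow_mod d1 i) i1 * coeff (xpow_mod d2 i) i2 * coeff (xpow_mod (d1 * d2) c) i)" for i1 i2
  define R where "R i1 i2 = coeff (xpow_mod d1 c) i1 * coeff (xpow_mod d2 c) i2" for i1 i2
  have d: "d1 * d2 > 0" using d1 d2 by simp
  have "(of_int (L i1 i2) :: complex) = of_int (R i1 i2)"
  proof (rule coeffs_eq_if_eval_primitive_root_pairs_eq[OF d1 d2 _ i1 i2])
    fix z1 z2 assume z1: "z1 \<in> primitive_roots d1" and z2: "z2 \<in> primitive_roots d2"
    have "(\<Sum>a<totient d1. \<Sum>b<totient d2. of_int (L a b) * z1 ^ a * z2 ^ b)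
        = (\<Sum>i<totient (d1 * d2). of_int (coeff (xpow_mod (d1 * d2) c) i) *
             (\<Sum>a<totient d1. of_int (coeff (xpow_mod d1 i) a) * z1 ^ a) *
             (\<Sum>b<totient d2. of_int (coeff (xpow_mod d2 i) b) * z2 ^ b))"
      unfolding L_def of_int_sum of_int_mult by (rule sum_sum_sum_product_swap)
    also have "\<dots> = (\<Sum>i<totient (d1 * d2). of_int (coeff (xpow_mod (d1 * d2) c) i) * (z1 * z2) ^ i)"
      by (simp add: sum_coeff_xpow_mod_primitive_root[OF d1 z1] sum_coeff_xpow_mod_primitive_root[OF d2 z2]
          power_mult_distrib mult.assoc)
    also have "\<dots> = (z1 * z2) ^ c"
      by (rule sum_coeff_xpow_mod_primitive_root[OF d primitive_roots_mult_coprime[OF d1 d2 cop z1 z2]])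
    also have "\<dots> = (\<Sum>a<totient d1. of_int (coeff (xpow_mod d1 c) a) * z1 ^ a) *
        (\<Sum>b<totient d2. of_int (coeff (xpow_mod d2 c) b) * z2 ^ b)"
      by (simp add: sum_coeff_xpow_mod_primitive_root[OF d1 z1] sum_coeff_xpow_mod_primitive_root[OF d2 z2]
          power_mult_distrib)
    also have "\<dots> = (\<Sum>a<totient d1. \<Sum>b<totient d2. of_int (R a b) * z1 ^ a * z2 ^ b)"
      unfolding R_def sum_product by (intro sum.cong refl) (simp add: mult_ac)
    finally show "(\<Sum>a<totient d1. \<Sum>b<totient d2. of_int (L a b) * z1 ^ a * z2 ^ b)
        = (\<Sum>a<totient d1. \<Sum>b<totient d2. (of_int (R a b) :: complex) * z1 ^ a * z2 ^ b)" .
  qed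
  then show ?thesis unfolding L_def R_def by (simp only: of_int_eq_iff)
qed

lemma set_A_rows: "k > 0 \<Longrightarrow> set (A_rows k) = (SIGMA d:{d. d dvd k}. {..<totient d})"
  unfolding A_rows_def by auto

lemma length_A_rows:
  assumes "k > 0"
  shows "length (A_rows k) = k"
proof -
  have "length (A_rows k) = sum_list (map totient (sorted_list_of_set {d. d dvd k}))"
    unfolding A_rows_def length_concat by (simp add: o_def)
  also have "\<dots> = (\<Sum>d | d dvd k. totient d)"
    by (subst sum_list_distinct_conv_sum_set) (use assms in auto)
  also have "\<dots> = k" by (rule totient_divisor_sum)
  finally show ?thesis .
qed

lemma distinct_A_rows:
  assumes "k > 0"
  shows "distinct (A_rows k)"
proof (rule card_distinct)
  have "card (set (A_rows k)) = (\<Sum>d | d dvd k. card {..<totient d})"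
    unfolding set_A_rows[OF assms] by (rule card_SigmaI) (use assms in auto)
  also have "\<dots> = k" using totient_divisor_sum[of k] by simp
  finally show "card (set (A_rows k)) = length (A_rows k)" using length_A_rows[OF assms] by simp
qed

lemma A_rows_nth_eq_iff: "k > 0 \<Longrightarrow> s < k \<Longrightarrow> s' < k \<Longrightarrow> A_rows k ! s = A_rows k ! s' \<longleftrightarrow> s = s'"
  using nth_eq_iff_index_eq[OF distinct_A_rows] length_A_rows by simp

lemma A_rows_nth:
  assumes "k > 0" and "s < k"
  shows "fst (A_rows k ! s) dvd k" and "fst (A_rows k ! s) > 0"
    and "snd (A_rows k ! s) < totient (fst (A_rows k ! s))"
proof -
  have "A_rows k ! s \<in> set (A_rows k)" using assms length_A_rows[OF assms(1)] by simp
  then show "fst (A_rows k ! s) dvd k" "snd (A_rows k ! s) < totient (fst (A_rows k ! s))"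
    unfolding set_A_rows[OF assms(1)] by auto
  then show "fst (A_rows k ! s) > 0" using assms(1) by (auto intro: dvd_pos_nat)
qed

lemma sum_A_rows:
  assumes "k > 0"
  shows "(\<Sum>s<k. f (A_rows k ! s)) = (\<Sum>d | d dvd k. \<Sum>i<totient d. f (d, i))"
proof -
  have "(\<Sum>s<k. f (A_rows k ! s)) = sum_list (map f (A_rows k))"
    unfolding sum_list_sum_nth using length_A_rows[OF assms] by (simp add: lessThan_atLeast0)
  also have "\<dots> = sum f (SIGMA d:{d. d dvd k}. {..<totient d})"
    using sum_list_distinct_conv_sum_set[OF distinct_A_rows[OF assms]] set_A_rows[OF assms] by simp
  also have "\<dots> = (\<Sum>d | d dvd k. \<Sum>i<totient d. f (d, i))"
    using sum.Sigma[of "{d. d dvd k}" "\<lambda>d. {..<totient d}" "\<lambda>d i. f (d, i)"] assms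
    by (simp add: case_prod_eta)
  finally show ?thesis .
qed

lemma sum_A_rows_delta:
  assumes "k > 0" and "D dvd k"
  shows "(\<Sum>s<k. if fst (A_rows k ! s) = D then h (snd (A_rows k ! s)) else 0) = (\<Sum>i<totient D. h i)"
proof -
  have "(\<Sum>s<k. if fst (A_rows k ! s) = D then h (snd (A_rows k ! s)) else 0)
      = (\<Sum>d | d dvd k. if d = D then (\<Sum>i<totient d. h i) else 0)"
    by (subst sum_A_rows[OF assms(1), where f = "\<lambda>p. if fst p = D then h (snd p) else 0"]) (auto intro: sum.cong)
  also have "\<dots> = (\<Sum>i<totient D. h i)"
    using assms by (subst sum.delta) auto
  finally show ?thesis .
qed

lemma A_mat_carrier: "A_mat k \<in> carrier_mat k k"
  unfolding A_mat_def by simp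

lemma A_mat_entry:
  "s < k \<Longrightarrow> c < k \<Longrightarrow> A_mat k $$ (s, c) = coeff (xpow_mod (fst (A_rows k ! s)) c) (snd (A_rows k ! s))"
  unfolding A_mat_def by (simp add: case_prod_beta)

section \<open>Equivalent matrices have the same Smith normal form\<close>

lemma index_mult_mat_sum:
  "A \<in> carrier_mat nr k \<Longrightarrow> B \<in> carrier_mat k nc \<Longrightarrow> i < nr \<Longrightarrow> j < nc \<Longrightarrow>
    (A * B) $$ (i, j) = (\<Sum>l<k. A $$ (i, l) * B $$ (l, j))"
  by (simp add: scalar_prod_def lessThan_atLeast0)

lemma invertible_mat_carrier_iff:
  fixes A :: "'a :: semiring_1 mat"
  assumes A: "A \<in> carrier_mat k k"
  shows "invertible_mat A \<longleftrightarrow> (\<exists>B \<in> carrier_mat k k. A * B = 1\<^sub>m k \<and> B * A = 1\<^sub>m k)"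
proof
  assume "invertible_mat A"
  then obtain B where B: "A * B = 1\<^sub>m (dim_row A)" "B * A = 1\<^sub>m (dim_row B)"
    unfolding invertible_mat_def inverts_mat_def by blast
  have "dim_col B = k" using arg_cong[OF B(1), of dim_col] A by simp
  moreover have "dim_row B = k" using arg_cong[OF B(2), of dim_col] A by simp
  ultimately show "\<exists>B \<in> carrier_mat k k. A * B = 1\<^sub>m k \<and> B * A = 1\<^sub>m k" using A B by auto
qed (use A in \<open>auto simp: invertible_mat_def inverts_mat_def\<close>)

lemma invertible_mat_mult:
  fixes A B :: "'a :: semiring_1 mat"
  assumes A: "A \<in> carrier_mat k k" "invertible_mat A" and B: "B \<in> carrier_mat k k" "invertible_mat B"
  shows "invertible_mat (A * B)"
proof -
  obtain A' where A': "A' \<in> carrier_mat k k" "A * A' = 1\<^sub>m k" "A' * A = 1\<^sub>m k"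
    using A invertible_mat_carrier_iff by blast
  obtain B' where B': "B' \<in> carrier_mat k k" "B * B' = 1\<^sub>m k" "B' * B = 1\<^sub>m k"
    using B invertible_mat_carrier_iff by blast
  have "(A * B) * (B' * A') = A * (B * B') * A'"
    using A(1) B(1) A'(1) B'(1) by (simp add: assoc_mult_mat[of _ k k _ k _ k])
  also have "\<dots> = 1\<^sub>m k" using A A' B' by simp
  finally have right: "(A * B) * (B' * A') = 1\<^sub>m k" .
  have "(B' * A') * (A * B) = B' * (A' * A) * B"
    using A(1) B(1) A'(1) B'(1) by (simp add: assoc_mult_mat[of _ k k _ k _ k])
  also have "\<dots> = 1\<^sub>m k" using B A' B' by simp
  finally have left: "(B' * A') * (A * B) = 1\<^sub>m k" .
  have "B' * A' \<in> carrier_mat k k" using A'(1) B'(1) by simp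
  with right left show ?thesis
    unfolding invertible_mat_carrier_iff[OF mult_carrier_mat[OF A(1) B(1)]] by blast
qed

lemma int_mat_left_inverse_if_right_inverse:
  fixes A B :: "int mat"
  assumes A: "A \<in> carrier_mat k k" and B: "B \<in> carrier_mat k k" and AB: "A * B = 1\<^sub>m k"
  shows "B * A = 1\<^sub>m k"
proof -
  let ?h = "of_int_hom.mat_hom :: int mat \<Rightarrow> rat mat"
  have "?h A * ?h B = ?h (A * B)" using A B by (simp add: of_int_hom.mat_hom_mult)
  also have "\<dots> = 1\<^sub>m k" using AB by (simp add: of_int_hom.mat_hom_one)
  finally have "?h A * ?h B = 1\<^sub>m k" .
  then have "?h B * ?h A = 1\<^sub>m k"
    by (rule mat_mult_left_right_inverse[rotated 2]) (use A B in auto)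
  then have h: "?h (B * A) = 1\<^sub>m k" using A B by (simp add: of_int_hom.mat_hom_mult)
  show ?thesis
  proof (rule eq_matI)
    fix i j assume ij: "i < dim_row (1\<^sub>m k)" "j < dim_col (1\<^sub>m k)"
    have "(of_int ((B * A) $$ (i, j)) :: rat) = ?h (B * A) $$ (i, j)" using ij A B by simp
    also have "\<dots> = of_int (1\<^sub>m k $$ (i, j))" unfolding h using ij by simp
    finally show "(B * A) $$ (i, j) = 1\<^sub>m k $$ (i, j)" by (simp only: of_int_eq_iff)
  qed (use A B in auto)
qed

lemma invertible_int_mat_if_right_inverse:
  fixes A B :: "int mat"
  assumes "A \<in> carrier_mat k k" and "B \<in> carrier_mat k k" and "A * B = 1\<^sub>m k"
  shows "invertible_mat A"
  using assms int_mat_left_inverse_if_right_inverse[OF assms] invertible_mat_carrier_iff by blast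

definition equivalent_mat :: "nat \<Rightarrow> 'a :: semiring_1 mat \<Rightarrow> 'a mat \<Rightarrow> bool" where
  "equivalent_mat k A B \<longleftrightarrow> (\<exists>P Q. P \<in> carrier_mat k k \<and> invertible_mat P \<and>
     Q \<in> carrier_mat k k \<and> invertible_mat Q \<and> B = P * A * Q)"

lemma equivalent_mat_trans:
  fixes A :: "'a :: semiring_1 mat"
  assumes A: "A \<in> carrier_mat k k" and AB: "equivalent_mat k A B" and BC: "equivalent_mat k B C"
  shows "equivalent_mat k A C"
proof -
  obtain P Q where PQ: "P \<in> carrier_mat k k" "invertible_mat P" "Q \<in> carrier_mat k k" "invertible_mat Q"
    and B: "B = P * A * Q"
    using AB unfolding equivalent_mat_def by blast
  obtain P' Q' where PQ': "P' \<in> carrier_mat k k" "invertible_mat P'" "Q' \<in> carrier_mat k k" "invertible_mat Q'"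
    and C: "C = P' * B * Q'"
    using BC unfolding equivalent_mat_def by blast
  have "C = (P' * P) * A * (Q * Q')"
    unfolding C B using A PQ PQ' by (simp add: assoc_mult_mat[of _ k k _ k _ k])
  moreover have "invertible_mat (P' * P)" "invertible_mat (Q * Q')"
    using PQ PQ' by (simp_all add: invertible_mat_mult)
  ultimately show ?thesis
    unfolding equivalent_mat_def using PQ PQ' by (intro exI[of _ "P' * P"] exI[of _ "Q * Q'"]) auto
qed

lemma equivalent_mat_sym:
  fixes A :: "'a :: semiring_1 mat"
  assumes A: "A \<in> carrier_mat k k" and AB: "equivalent_mat k A B"
  shows "equivalent_mat k B A"
proof -
  obtain P Q where PQ: "P \<in> carrier_mat k k" "invertible_mat P" "Q \<in> carrier_mat k k" "invertible_mat Q"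
    and B: "B = P * A * Q"
    using AB unfolding equivalent_mat_def by blast
  obtain P' where P': "P' \<in> carrier_mat k k" "P * P' = 1\<^sub>m k" "P' * P = 1\<^sub>m k"
    using PQ invertible_mat_carrier_iff by blast
  obtain Q' where Q': "Q' \<in> carrier_mat k k" "Q * Q' = 1\<^sub>m k" "Q' * Q = 1\<^sub>m k"
    using PQ invertible_mat_carrier_iff by blast
  have "P' * B * Q' = (P' * P) * A * (Q * Q')"
    unfolding B using A PQ(1,3) P'(1) Q'(1) by (simp add: assoc_mult_mat[of _ k k _ k _ k])
  also have "\<dots> = A" using A P' Q' by simp
  finally have "A = P' * B * Q'" ..
  moreover have "invertible_mat P'" "invertible_mat Q'"
    using PQ P' Q' by (auto simp: invertible_mat_carrier_iff)
  ultimately show ?thesis unfolding equivalent_mat_def using P' Q' by blast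
qed

lemma smith_normal_form_equivalent_mat:
  "A \<in> carrier_mat k k \<Longrightarrow>
    smith_normal_form A = (THE D. D \<in> carrier_mat k k \<and> is_smith_form D \<and> equivalent_mat k A D)"
  unfolding smith_normal_form_def equivalent_mat_def by simp

lemma smith_normal_form_cong:
  assumes A: "A \<in> carrier_mat k k" and AB: "equivalent_mat k A B"
  shows "smith_normal_form B = smith_normal_form A"
proof -
  have B: "B \<in> carrier_mat k k"
    using AB A unfolding equivalent_mat_def by auto
  have "equivalent_mat k B D \<longleftrightarrow> equivalent_mat k A D" for D
    using equivalent_mat_trans[OF A AB] equivalent_mat_trans[OF B equivalent_mat_sym[OF A AB]] by blast
  then show ?thesis
    unfolding smith_normal_form_equivalent_mat[OF A] smith_normal_form_equivalent_mat[OF B] by simp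
qed

section \<open>The equivalence \<open>P A\<^bsub>mn\<^esub> Q = A\<^sub>m \<otimes> A\<^sub>n\<close>\<close>

lemma coprime_divisor_factorization_unique:
  fixes d1 d2 e1 e2 :: nat
  assumes "coprime m n" and "d1 dvd m" "e1 dvd m" "d2 dvd n" "e2 dvd n" and eq: "d1 * d2 = e1 * e2"
  shows "d1 = e1" and "d2 = e2"
proof -
  have cop: "coprime d1 e2" "coprime e1 d2" using assms by (auto intro: coprime_divisors)
  have "d1 dvd e1 * e2" "e1 dvd d1 * d2" "d2 dvd e1 * e2" "e2 dvd d1 * d2"
    using eq by (metis dvd_triv_left dvd_triv_right)+
  then have "d1 dvd e1" "e1 dvd d1" "d2 dvd e2" "e2 dvd d2"
    using cop by (auto simp: coprime_commute coprime_dvd_mult_left_iff coprime_dvd_mult_right_iff)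
  then show "d1 = e1" "d2 = e2" by (auto intro: dvd_antisym)
qed

lemma cong_crt_combination:
  fixes u v :: nat
  assumes "[u = 1] (mod k)" and "[v = 0] (mod k)"
  shows "[a * u + b * v = a] (mod k)"
proof -
  have "[a * u + b * v = a * 1 + b * 0] (mod k)"
    using assms by (intro cong_add cong_mult cong_refl)
  then show ?thesis by simp
qed

text \<open>Row \<open>r\<close> of \<open>A\<^sub>m \<otimes> A\<^sub>n\<close> carries the pair of labels \<open>(div1 r, idx1 r)\<close> of \<open>A\<^sub>m\<close> and
  \<open>(div2 r, idx2 r)\<close> of \<open>A\<^sub>n\<close>, i.e. the coordinate of \<open>X\<^bsup>idx1 r\<^esup> \<otimes> X\<^bsup>idx2 r\<^esup>\<close> in
  \<open>\<int>[X]/(\<Phi>\<^bsub>div1 r\<^esub>) \<otimes> \<int>[X]/(\<Phi>\<^bsub>div2 r\<^esub>)\<close>; \<open>u\<close> and \<open>v\<close> are the CRT idempotents.\<close>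

locale crt_kron =
  fixes m n u v :: nat
  assumes m_pos: "m > 0" and n_pos: "n > 0" and coprime_mn: "coprime m n"
    and u: "[u = 1] (mod m)" "[u = 0] (mod n)" and v: "[v = 0] (mod m)" "[v = 1] (mod n)"
begin

abbreviation N :: nat where "N \<equiv> m * n"

lemma N_pos: "N > 0" using m_pos n_pos by simp

definition div1 :: "nat \<Rightarrow> nat" where "div1 r = fst (A_rows m ! (r div n))"
definition idx1 :: "nat \<Rightarrow> nat" where "idx1 r = snd (A_rows m ! (r div n))"
definition div2 :: "nat \<Rightarrow> nat" where "div2 r = fst (A_rows n ! (r mod n))"
definition idx2 :: "nat \<Rightarrow> nat" where "idx2 r = snd (A_rows n ! (r mod n))"

definition tensor_coeff :: "nat \<Rightarrow> nat \<Rightarrow> int" where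
  "tensor_coeff r i = coeff (xpow_mod (div1 r) i) (idx1 r) * coeff (xpow_mod (div2 r) i) (idx2 r)"

definition crt_col :: "nat \<Rightarrow> nat" where
  "crt_col c = ((c div n) * u + (c mod n) * v) mod N"

definition Pmat :: "int mat" where
  "Pmat = mat N N (\<lambda>(r, s). if fst (A_rows N ! s) = div1 r * div2 r then tensor_coeff r (snd (A_rows N ! s)) else 0)"

definition Pinv :: "int mat" where
  "Pinv = mat N N (\<lambda>(s, r). if fst (A_rows N ! s) = div1 r * div2 r
      then coeff (xpow_mod (fst (A_rows N ! s)) (idx1 r * u + idx2 r * v)) (snd (A_rows N ! s)) else 0)"

definition Qmat :: "int mat" where
  "Qmat = mat N N (\<lambda>(c', c). if c' = crt_col c then 1 else 0)"

lemma carrier_mats: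
  "Pmat \<in> carrier_mat N N" "Pinv \<in> carrier_mat N N" "Qmat \<in> carrier_mat N N" "transpose_mat Qmat \<in> carrier_mat N N"
  unfolding Pmat_def Pinv_def Qmat_def by auto

lemma row_labels:
  assumes "r < N"
  shows "div1 r dvd m" "div1 r > 0" "idx1 r < totient (div1 r)"
    and "div2 r dvd n" "div2 r > 0" "idx2 r < totient (div2 r)"
    and "div1 r * div2 r dvd N"
proof -
  have "r div n < m" "r mod n < n" using assms n_pos by (simp_all add: less_mult_imp_div_less)
  then show "div1 r dvd m" "div1 r > 0" "idx1 r < totient (div1 r)"
    and "div2 r dvd n" "div2 r > 0" "idx2 r < totient (div2 r)"
    unfolding div1_def idx1_def div2_def idx2_def using A_rows_nth m_pos n_pos by auto
  then show "div1 r * div2 r dvd N" by (simp add: mult_dvd_mono)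
qed

lemma row_eq_iff:
  assumes "r < N" and "r' < N"
  shows "r = r' \<longleftrightarrow> div1 r = div1 r' \<and> idx1 r = idx1 r' \<and> div2 r = div2 r' \<and> idx2 r = idx2 r'"
proof -
  have "r div n < m" "r' div n < m" using assms by (simp_all add: less_mult_imp_div_less)
  then have "div1 r = div1 r' \<and> idx1 r = idx1 r' \<longleftrightarrow> r div n = r' div n"
    unfolding div1_def idx1_def using A_rows_nth_eq_iff[OF m_pos] by (simp add: prod_eq_iff)
  moreover have "div2 r = div2 r' \<and> idx2 r = idx2 r' \<longleftrightarrow> r mod n = r' mod n"
    unfolding div2_def idx2_def using A_rows_nth_eq_iff[OF n_pos] n_pos by (simp add: prod_eq_iff)
  moreover have "r = r' \<longleftrightarrow> r div n = r' div n \<and> r mod n = r' mod n" by (metis div_mult_mod_eq)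
  ultimately show ?thesis by blast
qed

lemma crt_col:
  assumes c: "c < N"
  shows "crt_col c < N" "[crt_col c = c div n] (mod m)" "[crt_col c = c mod n] (mod n)"
proof -
  show "crt_col c < N" unfolding crt_col_def using N_pos by simp
  have "[crt_col c = (c div n) * u + (c mod n) * v] (mod m)"
    unfolding crt_col_def cong_def by (simp add: mod_mod_cancel)
  also have "[(c div n) * u + (c mod n) * v = c div n] (mod m)" by (rule cong_crt_combination[OF u(1) v(1)])
  finally show "[crt_col c = c div n] (mod m)" .
  have "[crt_col c = (c mod n) * v + (c div n) * u] (mod n)"
    unfolding crt_col_def cong_def by (simp add: mod_mod_cancel add.commute)
  also have "[(c mod n) * v + (c div n) * u = c mod n] (mod n)" by (rule cong_crt_combination[OF v(2) u(2)])
  finally show "[crt_col c = c mod n] (mod n)" .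
qed

lemma crt_col_inj:
  assumes "c1 < N" "c2 < N" "crt_col c1 = crt_col c2"
  shows "c1 = c2"
proof -
  have "[c1 div n = c2 div n] (mod m)" "[c1 mod n = c2 mod n] (mod n)"
    using crt_col[OF assms(1)] crt_col[OF assms(2)] assms(3) by (metis cong_sym cong_trans)+
  moreover have "c1 div n < m" "c2 div n < m" using assms by (simp_all add: less_mult_imp_div_less)
  ultimately have "c1 div n = c2 div n" "c1 mod n = c2 mod n" by (simp_all add: cong_def)
  then show ?thesis by (metis div_mult_mod_eq)
qed

lemma kron_entry:
  assumes "r < N" and "c < N"
  shows "kron (A_mat m) (A_mat n) $$ (r, c) =
    coeff (xpow_mod (div1 r) (c div n)) (idx1 r) * coeff (xpow_mod (div2 r) (c mod n)) (idx2 r)"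
proof -
  have "r div n < m" "c div n < m" "r mod n < n" "c mod n < n"
    using assms n_pos by (simp_all add: less_mult_imp_div_less)
  then show ?thesis
    unfolding kron_def div1_def idx1_def div2_def idx2_def using assms
    by (simp add: A_mat_def case_prod_beta)
qed

lemma Pmat_mult_entry:
  assumes X: "X \<in> carrier_mat N N" and r: "r < N" and c: "c < N"
    and Xf: "\<And>s. s < N \<Longrightarrow> X $$ (s, c) = f (fst (A_rows N ! s)) (snd (A_rows N ! s))"
  shows "(Pmat * X) $$ (r, c) = (\<Sum>i<totient (div1 r * div2 r). tensor_coeff r i * f (div1 r * div2 r) i)"
proof -
  let ?D = "div1 r * div2 r"
  have "(Pmat * X) $$ (r, c) = (\<Sum>s<N. Pmat $$ (r, s) * X $$ (s, c))"
    by (rule index_mult_mat_sum[OF carrier_mats(1) X r c])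
  also have "\<dots> = (\<Sum>s<N. if fst (A_rows N ! s) = ?D
      then tensor_coeff r (snd (A_rows N ! s)) * f ?D (snd (A_rows N ! s)) else 0)"
    by (rule sum.cong[OF refl]) (simp add: Pmat_def Xf r)
  also have "\<dots> = (\<Sum>i<totient ?D. tensor_coeff r i * f ?D i)"
    by (rule sum_A_rows_delta[OF N_pos row_labels(7)[OF r]])
  finally show ?thesis .
qed

lemma Pmat_A_mat_entry:
  assumes r: "r < N" and c: "c < N"
  shows "(Pmat * A_mat N) $$ (r, c) = coeff (xpow_mod (div1 r) c) (idx1 r) * coeff (xpow_mod (div2 r) c) (idx2 r)"
proof -
  have "(Pmat * A_mat N) $$ (r, c)
      = (\<Sum>i<totient (div1 r * div2 r). tensor_coeff r i * coeff (xpow_mod (div1 r * div2 r) c) i)"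
    by (rule Pmat_mult_entry[OF A_mat_carrier r c, where f = "\<lambda>d. coeff (xpow_mod d c)"])
       (simp add: A_mat_entry c)
  also have "\<dots> = coeff (xpow_mod (div1 r) c) (idx1 r) * coeff (xpow_mod (div2 r) c) (idx2 r)"
    unfolding tensor_coeff_def using row_labels[OF r] coprime_divisors[OF _ _ coprime_mn]
    by (intro coeff_xpow_mod_mult_coprime) auto
  finally show ?thesis .
qed

lemma mult_Qmat_entry:
  assumes X: "X \<in> carrier_mat N N" and r: "r < N" and c: "c < N"
  shows "(X * Qmat) $$ (r, c) = X $$ (r, crt_col c)"
proof -
  have "(X * Qmat) $$ (r, c) = (\<Sum>l<N. X $$ (r, l) * Qmat $$ (l, c))"
    by (rule index_mult_mat_sum[OF X carrier_mats(3) r c])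
  also have "\<dots> = (\<Sum>l<N. if l = crt_col c then X $$ (r, l) else 0)"
    by (rule sum.cong[OF refl]) (use c in \<open>simp add: Qmat_def\<close>)
  also have "\<dots> = X $$ (r, crt_col c)" using crt_col(1)[OF c] by (subst sum.delta) auto
  finally show ?thesis .
qed

lemma Pmat_A_mat_Qmat: "Pmat * A_mat N * Qmat = kron (A_mat m) (A_mat n)"
proof (rule eq_matI)
  fix r c assume "r < dim_row (kron (A_mat m) (A_mat n))" "c < dim_col (kron (A_mat m) (A_mat n))"
  then have r: "r < N" and c: "c < N" by (simp_all add: kron_def A_mat_def)
  note labels = row_labels[OF r]
  have "xpow_mod (div1 r) (crt_col c) = xpow_mod (div1 r) (c div n)"
    by (rule xpow_mod_cong[OF labels(2) cong_dvd_modulus_nat[OF crt_col(2)[OF c] labels(1)]])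
  moreover have "xpow_mod (div2 r) (crt_col c) = xpow_mod (div2 r) (c mod n)"
    by (rule xpow_mod_cong[OF labels(5) cong_dvd_modulus_nat[OF crt_col(3)[OF c] labels(4)]])
  moreover have "(Pmat * A_mat N * Qmat) $$ (r, c) = (Pmat * A_mat N) $$ (r, crt_col c)"
    using carrier_mats(1) A_mat_carrier by (intro mult_Qmat_entry[OF _ r c]) simp
  ultimately show "(Pmat * A_mat N * Qmat) $$ (r, c) = kron (A_mat m) (A_mat n) $$ (r, c)"
    using Pmat_A_mat_entry[OF r crt_col(1)[OF c]] kron_entry[OF r c] by simp
qed (use carrier_mats in \<open>simp_all add: kron_def A_mat_def\<close>)

text \<open>\<open>Pinv\<close> maps the coordinate vector of \<open>X\<^sup>i\<^sup>1 \<otimes> X\<^sup>i\<^sup>2\<close> to that of \<open>X\<^bsup>i\<^sub>1u + i\<^sub>2v\<^esup>\<close>,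
  and \<open>X\<^bsup>i\<^sub>1u + i\<^sub>2v\<^esup> \<mapsto> X\<^bsup>i\<^sub>1u + i\<^sub>2v\<^esup> \<otimes> X\<^bsup>i\<^sub>1u + i\<^sub>2v\<^esup> = X\<^sup>i\<^sup>1 \<otimes> X\<^sup>i\<^sup>2\<close>.\<close>

lemma Pmat_Pinv_entry:
  assumes r: "r < N" and r': "r' < N"
  shows "(Pmat * Pinv) $$ (r, r') = (if r = r' then 1 else 0)"
proof -
  let ?D = "div1 r * div2 r" and ?D' = "div1 r' * div2 r'" and ?c = "idx1 r' * u + idx2 r' * v"
  note labels = row_labels[OF r] and labels' = row_labels[OF r']
  have "(Pmat * Pinv) $$ (r, r') = (\<Sum>i<totient ?D. tensor_coeff r i * (if ?D = ?D' then coeff (xpow_mod ?D ?c) i else 0))"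
    by (rule Pmat_mult_entry[OF carrier_mats(2) r r',
          where f = "\<lambda>d i. if d = ?D' then coeff (xpow_mod d ?c) i else 0"])
       (simp add: Pinv_def r')
  also have "\<dots> = (if r = r' then 1 else 0)"
  proof (cases "?D = ?D'")
    case True
    then have same: "div1 r = div1 r'" "div2 r = div2 r'"
      using coprime_divisor_factorization_unique[OF coprime_mn labels(1) labels'(1) labels(4) labels'(4)] by auto
    have "[?c = idx1 r'] (mod m)" by (rule cong_crt_combination[OF u(1) v(1)])
    moreover have "[?c = idx2 r'] (mod n)"
      using cong_crt_combination[OF v(2) u(2), of "idx2 r'" "idx1 r'"] by (simp only: add.commute)
    ultimately have "xpow_mod (div1 r) ?c = xpow_mod (div1 r) (idx1 r')"
      "xpow_mod (div2 r) ?c = xpow_mod (div2 r) (idx2 r')"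
      using labels by (metis xpow_mod_cong cong_dvd_modulus_nat)+
    then have "xpow_mod (div1 r) ?c = monom 1 (idx1 r')" "xpow_mod (div2 r) ?c = monom 1 (idx2 r')"
      using labels labels' same by (simp_all add: xpow_mod_small)
    moreover have "(\<Sum>i<totient ?D. tensor_coeff r i * coeff (xpow_mod ?D ?c) i)
        = coeff (xpow_mod (div1 r) ?c) (idx1 r) * coeff (xpow_mod (div2 r) ?c) (idx2 r)"
      unfolding tensor_coeff_def using labels coprime_divisors[OF _ _ coprime_mn]
      by (intro coeff_xpow_mod_mult_coprime) auto
    ultimately show ?thesis using True same row_eq_iff[OF r r'] by (simp add: coeff_monom)
  qed (auto simp: row_eq_iff[OF r r'])
  finally show ?thesis .
qed

lemma Pmat_Pinv: "Pmat * Pinv = 1\<^sub>m N"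
  by (rule eq_matI) (use carrier_mats Pmat_Pinv_entry in auto)

lemma transpose_Qmat_Qmat: "transpose_mat Qmat * Qmat = 1\<^sub>m N"
proof (rule eq_matI)
  fix c1 c2 assume "c1 < dim_row (1\<^sub>m N)" "c2 < dim_col (1\<^sub>m N)"
  then have c: "c1 < N" "c2 < N" by auto
  have "(transpose_mat Qmat * Qmat) $$ (c1, c2) = (\<Sum>l<N. transpose_mat Qmat $$ (c1, l) * Qmat $$ (l, c2))"
    by (rule index_mult_mat_sum[OF carrier_mats(4) carrier_mats(3) c])
  also have "\<dots> = (\<Sum>l<N. if l = crt_col c1 then (if crt_col c1 = crt_col c2 then 1 else 0) else 0)"
    by (rule sum.cong[OF refl]) (use c in \<open>auto simp: Qmat_def\<close>)
  also have "\<dots> = (if c1 = c2 then 1 else 0)"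
    using crt_col(1)[OF c(1)] crt_col_inj[OF c] by (subst sum.delta) auto
  finally show "(transpose_mat Qmat * Qmat) $$ (c1, c2) = 1\<^sub>m N $$ (c1, c2)" using c by simp
qed (use carrier_mats in auto)

lemma equivalent_A_mat_kron: "equivalent_mat N (A_mat N) (kron (A_mat m) (A_mat n))"
proof -
  have "invertible_mat Pmat"
    by (rule invertible_int_mat_if_right_inverse[OF carrier_mats(1,2) Pmat_Pinv])
  moreover have "Qmat * transpose_mat Qmat = 1\<^sub>m N"
    by (rule int_mat_left_inverse_if_right_inverse[OF carrier_mats(4,3) transpose_Qmat_Qmat])
  then have "invertible_mat Qmat"
    by (rule invertible_int_mat_if_right_inverse[OF carrier_mats(3,4)])
  ultimately show ?thesis
    unfolding equivalent_mat_def Pmat_A_mat_Qmat[symmetric]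
    by (intro exI[of _ Pmat] exI[of _ Qmat]) (simp add: carrier_mats)
qed

end

theorem theorem2p4:
  fixes m n :: nat
  assumes "m > 0" and "n > 0" and "coprime m n"
  shows "smith_normal_form (kron (A_mat m) (A_mat n)) = smith_normal_form (A_mat (m * n))"
proof -
  obtain u where "[u = 1] (mod m)" "[u = 0] (mod n)" using binary_chinese_remainder_nat[OF assms(3)] by blast
  moreover obtain v where "[v = 0] (mod m)" "[v = 1] (mod n)" using binary_chinese_remainder_nat[OF assms(3)] by blast
  ultimately interpret crt_kron m n u v
    using assms by unfold_locales
  show ?thesis
    by (rule smith_normal_form_cong[OF A_mat_carrier equivalent_A_mat_kron])
qed

end
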